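(* Let $A\in\mathbb{R}^{m\times n}$, $y\in\mathbb{R}^m$, $\lambda>0$, and let $x^\star$ be a global minimizer of $$\min_{x\in\mathbb{R}^n}\ \frac{1}{2\lambda}\|Ax-y\|^2+\sum_{i=1}^{N} w_i\|x_{G_i}\|.$$ Let $\beta^\star=-\frac{1}{\lambda}A^\top(Ax^\star-y)$. Then for every $t\in\{1,\dots,N\}$: if $\|\beta^\star_{G_t}\|<w_t$, then $x^\star_{G_t}=0$.
   Context: Let $n,N\in\mathbb{N}$ and let $G_1,\dots,G_N\subseteq\{1,\dots,n\}$ be nonempty index sets (groups), possibly overlapping, with $\bigcup_{i=1}^N G_i=\{1,\dots,n\}$, and let $w_1,\dots,w_N>0$ be weights. For $x\in\mathbb{R}^n$ and $G\subseteq\{1,\dots,n\}$, $x_G\in\mathbb{R}^{|G|}$ denotes the subvector of $x$ with entries indexed by $G$ (in increasing index order). All norms are Euclidean. The vector $\beta^\star$ is called the LASSO certificate. *)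

theory Defs
  imports "HOL-Analysis.Analysis"
begin

definition subvec_norm :: "'n::finite set \<Rightarrow> real^'n \<Rightarrow> real" where
  "subvec_norm G x = sqrt (\<Sum>j\<in>G. (x $ j)^2)"

definition group_lasso_obj ::
  "real^'n::finite^'m::finite \<Rightarrow> real^'m \<Rightarrow> real \<Rightarrow> nat \<Rightarrow> (nat \<Rightarrow> 'n set) \<Rightarrow> (nat \<Rightarrow> real)
   \<Rightarrow> real^'n \<Rightarrow> real" where
  "group_lasso_obj A y lam N G w x =
     (1 / (2 * lam)) * (norm (A *v x - y))^2 + (\<Sum>i=1..N. w i * subvec_norm (G i) x)"

end

theory Submission
  imports Defs
begin

text \<open>Shrinking \<open>x\<close> on the group \<open>G\<^sub>t\<close> to \<open>x - s x\<^sub>G\<^sub>t\<close> lowers the penalty by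
  \<open>s w\<^sub>t \<parallel>x\<^sub>G\<^sub>t\<parallel>\<close>, while the quadratic loss grows by at most
  \<open>s \<parallel>\<beta>\<^sub>G\<^sub>t\<parallel> \<parallel>x\<^sub>G\<^sub>t\<parallel> + O(s\<^sup>2)\<close>, by Cauchy-Schwarz on the linear term. So if
  \<open>\<parallel>\<beta>\<^sub>G\<^sub>t\<parallel> < w\<^sub>t\<close> and \<open>x\<^sub>G\<^sub>t \<noteq> 0\<close>, a small step strictly decreases the objective.\<close>

lemma subvec_norm_pos_iff: "0 < subvec_norm G x \<longleftrightarrow> (\<exists>j\<in>G. x $ j \<noteq> 0)"
proof -
  have "(\<Sum>j\<in>G. (x $ j)\<^sup>2) = 0 \<longleftrightarrow> (\<forall>j\<in>G. x $ j = 0)"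
    by (simp add: sum_nonneg_eq_0_iff)
  then show ?thesis
    using sum_nonneg[of G "\<lambda>j. (x $ j)\<^sup>2"]
    by (auto simp: subvec_norm_def order_less_le)
qed

definition group_proj :: "'n::finite set \<Rightarrow> real^'n \<Rightarrow> real^'n" where
  "group_proj G x = (\<chi> j. if j \<in> G then x $ j else 0)"

lemma shrink_component:
  "(x - s *\<^sub>R group_proj G x) $ j = (if j \<in> G then (1 - s) * x $ j else x $ j)"
  by (simp add: group_proj_def algebra_simps)

lemma subvec_norm_shrink_le:
  assumes "0 \<le> s" "s \<le> 1"
  shows "subvec_norm H (x - s *\<^sub>R group_proj G x) \<le> subvec_norm H x"
proof -
  have "((1 - s) * x $ j)\<^sup>2 \<le> (x $ j)\<^sup>2" for j
  proof -
    have "(1 - s)\<^sup>2 \<le> 1" using assms by (simp add: power_le_one)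
    then show ?thesis by (simp add: power_mult_distrib mult_left_le_one_le)
  qed
  then show ?thesis
    unfolding subvec_norm_def shrink_component
    by (intro real_sqrt_le_mono sum_mono) auto
qed

lemma subvec_norm_shrink_same:
  assumes "s \<le> 1"
  shows "subvec_norm G (x - s *\<^sub>R group_proj G x) = (1 - s) * subvec_norm G x"
proof -
  have "(\<Sum>j\<in>G. ((x - s *\<^sub>R group_proj G x) $ j)\<^sup>2) = (1 - s)\<^sup>2 * (\<Sum>j\<in>G. (x $ j)\<^sup>2)"
    unfolding shrink_component by (simp add: sum_distrib_left power_mult_distrib)
  then show ?thesis
    using assms by (simp add: subvec_norm_def real_sqrt_mult)
qed

lemma inner_group_proj_le: "inner u (group_proj G x) \<le> subvec_norm G u * subvec_norm G x"
proof -
  have "inner u (group_proj G x) = (\<Sum>j\<in>G. u $ j * x $ j)"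
    by (simp add: inner_vec_def group_proj_def if_distrib sum.If_cases)
  also have "\<dots> \<le> (\<Sum>j\<in>G. \<bar>u $ j\<bar> * \<bar>x $ j\<bar>)"
    by (intro sum_mono) (metis abs_ge_self abs_mult)
  also have "\<dots> \<le> L2_set (\<lambda>j. u $ j) G * L2_set (\<lambda>j. x $ j) G"
    by (rule L2_set_mult_ineq)
  finally show ?thesis
    by (simp add: subvec_norm_def L2_set_def)
qed

lemma weighted_group_norms_shrink_le:
  fixes N :: nat and w :: "nat \<Rightarrow> real"
  assumes weights_nonneg: "\<forall>i\<in>{1..N}. 0 \<le> w i"
    and t_range: "t \<in> {1..N}" and s_range: "0 \<le> s" "s \<le> 1"
  shows "(\<Sum>i=1..N. w i * subvec_norm (G i) (x - s *\<^sub>R group_proj (G t) x))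
    \<le> (\<Sum>i=1..N. w i * subvec_norm (G i) x) - s * w t * subvec_norm (G t) x"
proof -
  let ?z = "x - s *\<^sub>R group_proj (G t) x"
  have split: "(\<Sum>i=1..N. f i) = f t + (\<Sum>i\<in>{1..N} - {t}. f i)" for f :: "nat \<Rightarrow> real"
    using sum.remove[OF _ t_range] by simp
  have "(\<Sum>i\<in>{1..N} - {t}. w i * subvec_norm (G i) ?z) \<le> (\<Sum>i\<in>{1..N} - {t}. w i * subvec_norm (G i) x)"
    using weights_nonneg subvec_norm_shrink_le[OF s_range]
    by (intro sum_mono mult_left_mono) auto
  moreover have "w t * subvec_norm (G t) ?z = w t * subvec_norm (G t) x - s * w t * subvec_norm (G t) x"
    unfolding subvec_norm_shrink_same[OF s_range(2)] by (simp add: algebra_simps)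
  ultimately show ?thesis
    unfolding split[of "\<lambda>i. w i * subvec_norm (G i) _"] by linarith
qed

lemma norm_residual_diff_sq:
  fixes A :: "real^'n::finite^'m::finite"
  shows "(norm (A *v (x - v) - y))\<^sup>2
    = (norm (A *v x - y))\<^sup>2 - 2 * inner (transpose A *v (A *v x - y)) v + (norm (A *v v))\<^sup>2"
proof -
  have "A *v (x - v) - y = (A *v x - y) - A *v v"
    by (simp add: matrix_vector_mult_diff_distrib)
  moreover have "inner (A *v x - y) (A *v v) = inner (transpose A *v (A *v x - y)) v"
    by (simp add: dot_lmul_matrix)
  ultimately show ?thesis
    by (simp add: power2_norm_eq_inner inner_diff_left inner_diff_right inner_commute)
qed

lemma group_lasso_obj_shrink_le:
  fixes A :: "real^'n::finite^'m::finite" and x :: "real^'n" and y :: "real^'m" and lam :: real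
    and G :: "nat \<Rightarrow> 'n set" and t :: nat
  defines "\<beta> \<equiv> - (1 / lam) *\<^sub>R (transpose A *v (A *v x - y))"
    and "p \<equiv> group_proj (G t) x"
  assumes lam_pos: "0 < lam" and weights_nonneg: "\<forall>i\<in>{1..N}. 0 \<le> w i"
    and t_range: "t \<in> {1..N}" and s_range: "0 \<le> s" "s \<le> 1"
  shows "group_lasso_obj A y lam N G w (x - s *\<^sub>R p)
    \<le> group_lasso_obj A y lam N G w x
       - s * ((w t - subvec_norm (G t) \<beta>) * subvec_norm (G t) x)
       + s\<^sup>2 * ((norm (A *v p))\<^sup>2 / (2 * lam))"
proof -
  have "(1 / (2 * lam)) * (norm (A *v (x - s *\<^sub>R p) - y))\<^sup>2
      = (1 / (2 * lam)) * (norm (A *v x - y))\<^sup>2 + s * inner \<beta> p + s\<^sup>2 * ((norm (A *v p))\<^sup>2 / (2 * lam))"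
    using norm_residual_diff_sq[of A x "s *\<^sub>R p" y] lam_pos
    by (simp add: \<beta>_def matrix_vector_mult_scaleR power_mult_distrib field_simps)
  moreover have "s * inner \<beta> p \<le> s * (subvec_norm (G t) \<beta> * subvec_norm (G t) x)"
    unfolding p_def using inner_group_proj_le s_range(1) by (rule mult_left_mono)
  moreover note weighted_group_norms_shrink_le[OF weights_nonneg t_range s_range, of G x]
  ultimately show ?thesis
    unfolding group_lasso_obj_def p_def by (simp add: algebra_simps)
qed

lemma small_step_exists:
  fixes a K :: real
  assumes "0 < a" "0 \<le> K"
  shows "\<exists>s. 0 < s \<and> s \<le> 1 \<and> s * K < a"
proof -
  define s where "s = min 1 (a / (K + 1))"
  have "s * K \<le> a / (K + 1) * K"
    using assms by (intro mult_right_mono) (auto simp: s_def)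
  also have "\<dots> < a"
    using assms by (simp add: field_simps)
  finally show ?thesis
    using assms by (intro exI[of _ s]) (auto simp: s_def)
qed

theorem proposition3p5:
  fixes A :: "real^'n::finite^'m::finite" and y :: "real^'m"
    and lam :: real and N :: nat and G :: "nat \<Rightarrow> 'n set" and w :: "nat \<Rightarrow> real"
    and xs :: "real^'n" and t :: nat
  assumes groups_nonempty: "\<forall>i\<in>{1..N}. G i \<noteq> {}"
    and groups_cover: "(\<Union>i\<in>{1..N}. G i) = UNIV"
    and weights_pos: "\<forall>i\<in>{1..N}. w i > 0"
    and lam_pos: "lam > 0"
    and minimizer: "\<forall>x. group_lasso_obj A y lam N G w xs \<le> group_lasso_obj A y lam N G w x"
    and t_range: "t \<in> {1..N}"
    and small: "subvec_norm (G t) (- (1 / lam) *\<^sub>R (transpose A *v (A *v xs - y))) < w t"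
  shows "\<forall>j\<in>G t. xs $ j = 0"
proof (rule ccontr)
  let ?b = "subvec_norm (G t) (- (1 / lam) *\<^sub>R (transpose A *v (A *v xs - y)))"
  let ?p = "group_proj (G t) xs"
  let ?K = "(norm (A *v ?p))\<^sup>2 / (2 * lam)"
  assume "\<not> (\<forall>j\<in>G t. xs $ j = 0)"
  then have "0 < subvec_norm (G t) xs"
    by (simp add: subvec_norm_pos_iff)
  with small have "0 < (w t - ?b) * subvec_norm (G t) xs"
    by simp
  moreover have "0 \<le> ?K"
    using lam_pos by simp
  ultimately obtain s where s: "0 < s" "s \<le> 1" "s * ?K < (w t - ?b) * subvec_norm (G t) xs"
    using small_step_exists by blast
  have "group_lasso_obj A y lam N G w (xs - s *\<^sub>R ?p)
      \<le> group_lasso_obj A y lam N G w xs + s * (s * ?K - (w t - ?b) * subvec_norm (G t) xs)"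
    using group_lasso_obj_shrink_le[OF lam_pos _ t_range, where x = xs and y = y and s = s] weights_pos s
    by (simp add: less_imp_le power2_eq_square algebra_simps)
  also have "\<dots> < group_lasso_obj A y lam N G w xs"
    using s by (simp add: mult_pos_neg)
  finally show False
    using minimizer by (meson not_le)
qed

end
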